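(* Let $n\le m$, $w\in\mathcal W_m$ and $w^c=c_m(w)\in\mathcal W^c_m$, with $w$ on $[0,K_m)$ and $w^c$ on $[0,q_m)$. Let $S^*$ be a set of $(n,m)$-genetic markers, $g=\prod_{i=n}^{m-1}k_i$ the total number of $(n,m)$-genetic markers and $d=|S^*|/g$. Let $A\subseteq[0,K_m)$ be the set of locations at which an $n$-subword of $w$ with genetic marker in $S^*$ begins, and $A^c\subseteq[0,q_m)$ the set of locations at which an $n$-subword of $w^c$ with genetic marker in $S^*$ begins. Then $$\frac{|A|}{K_m}=\frac{d}{K_n},\qquad \frac{|A^c|}{q_m}=\frac{d}{q_n}\prod_{p=n}^{m-1}\Big(1-\frac1{l_p}\Big),$$ and consequently $\frac{|A^c|}{q_m}=\frac{|A|}{K_m}\prod_{p=n}^{m-1}(1-\frac1{l_p})\frac{K_n}{q_n}$.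
   Context: Fix a circular coefficient sequence $\langle k_n,l_n\rangle$, $K_n=\prod_{i<n}k_i$, $q_0=1,p_0=0$, $q_{n+1}=k_nl_nq_n^2$, $p_{n+1}=p_nq_nk_nl_n+1$; $\mathcal C_n(w_0,\dots,w_{k_n-1})=\prod_{i=0}^{q_n-1}\prod_{j=0}^{k_n-1}(b^{q_n-j_i}w_j^{l_n-1}e^{j_i})$ with $j_i\in[0,q_n)$, $j_i\equiv p_n^{-1}i\pmod{q_n}$. $\langle\mathcal W_n\rangle$ is an odometer-based construction sequence ($\mathcal W_0=\Sigma$, $\mathcal W_{n+1}\subseteq(\mathcal W_n)^{k_n}$, uniquely readable); $c_0=\mathrm{id}$, $c_{n+1}(w_0\cdots w_{k_n-1})=\mathcal C_n(c_n(w_0),\dots,c_n(w_{k_n-1}))$, $\mathcal W_n^c=c_n[\mathcal W_n]$. Genetic markers: in an odometer word $w_0w_1\cdots w_{k_t-1}\in\mathcal W_{t+1}$ the $t$-subword $w_j$ has marker $j$; in a circular word $\mathcal C_t(w_0,\dots,w_{k_t-1})$ each displayed copy of $w_j$ in the power $w_j^{l_t-1}$ is a $t$-subword with marker $j$. An $n$-subword occurrence in an $m$-word lies in a unique chain $u_n\subset u_{n+1}\subset\dots\subset u_m$ with $u_i$ a subword of $u_{i+1}$ of marker $j_i$; its $(n,m)$-genetic marker is $\langle j_n,\dots,j_{m-1}\rangle$, $0\le j_i<k_i$. *)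

theory Defs
  imports Complex_Main
begin

definition circ_coeff_seq :: "(nat \<Rightarrow> nat) \<Rightarrow> (nat \<Rightarrow> nat) \<Rightarrow> bool" where
  "circ_coeff_seq k l \<longleftrightarrow> (\<forall>n. 2 \<le> k n \<and> 1 \<le> l n) \<and> summable (\<lambda>n. 1 / real (l n))"

definition KK :: "(nat \<Rightarrow> nat) \<Rightarrow> nat \<Rightarrow> nat" where
  "KK k n = (\<Prod>i<n. k i)"

fun qq :: "(nat \<Rightarrow> nat) \<Rightarrow> (nat \<Rightarrow> nat) \<Rightarrow> nat \<Rightarrow> nat" where
  "qq k l 0 = 1"
| "qq k l (Suc n) = k n * l n * (qq k l n)^2"

fun pp :: "(nat \<Rightarrow> nat) \<Rightarrow> (nat \<Rightarrow> nat) \<Rightarrow> nat \<Rightarrow> nat" where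
  "pp k l 0 = 0"
| "pp k l (Suc n) = pp k l n * qq k l n * k n * l n + 1"

definition jidx :: "(nat \<Rightarrow> nat) \<Rightarrow> (nat \<Rightarrow> nat) \<Rightarrow> nat \<Rightarrow> nat \<Rightarrow> nat" where
  "jidx k l n i = (THE j. j < qq k l n \<and> (pp k l n * j) mod qq k l n = i mod qq k l n)"

datatype 'a csym = Sym 'a | Bsym | Esym

definition cblock :: "(nat \<Rightarrow> nat) \<Rightarrow> (nat \<Rightarrow> nat) \<Rightarrow> nat \<Rightarrow> 'a csym list list \<Rightarrow> nat \<Rightarrow> nat \<Rightarrow> 'a csym list" where
  "cblock k l n vs i j =
     replicate (qq k l n - jidx k l n i) Bsym @ concat (replicate (l n - 1) (vs ! j))
       @ replicate (jidx k l n i) Esym"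

definition cblocks :: "(nat \<Rightarrow> nat) \<Rightarrow> (nat \<Rightarrow> nat) \<Rightarrow> nat \<Rightarrow> 'a csym list list \<Rightarrow> 'a csym list list" where
  "cblocks k l n vs = concat (map (\<lambda>i. map (\<lambda>j. cblock k l n vs i j) [0..<k n]) [0..<qq k l n])"

definition circ_op :: "(nat \<Rightarrow> nat) \<Rightarrow> (nat \<Rightarrow> nat) \<Rightarrow> nat \<Rightarrow> 'a csym list list \<Rightarrow> 'a csym list" where
  "circ_op k l n vs = concat (cblocks k l n vs)"

definition chunks :: "(nat \<Rightarrow> nat) \<Rightarrow> nat \<Rightarrow> 'a list \<Rightarrow> 'a list list" where
  "chunks k m w = map (\<lambda>j. take (KK k m) (drop (j * KK k m) w)) [0..<k m]"

fun cmap :: "(nat \<Rightarrow> nat) \<Rightarrow> (nat \<Rightarrow> nat) \<Rightarrow> nat \<Rightarrow> 'a list \<Rightarrow> 'a csym list" where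
  "cmap k l 0 w = map Sym w"
| "cmap k l (Suc m) w = circ_op k l m (map (cmap k l m) (chunks k m w))"

definition odometer_construction_seq ::
  "(nat \<Rightarrow> nat) \<Rightarrow> 'a set \<Rightarrow> (nat \<Rightarrow> 'a list set) \<Rightarrow> bool" where
  "odometer_construction_seq k Alph W \<longleftrightarrow>
     finite Alph \<and> W 0 = (\<lambda>a. [a]) ` Alph \<and>
     (\<forall>n. W (Suc n) \<subseteq> {concat ws | ws. length ws = k n \<and> set ws \<subseteq> W n}) \<and>
     (\<forall>n u v x pre suf. u \<in> W n \<longrightarrow> v \<in> W n \<longrightarrow> x \<in> W n \<longrightarrow>
        u @ v = pre @ x @ suf \<longrightarrow> pre = [] \<or> suf = [])"

definition genetic_markers :: "(nat \<Rightarrow> nat) \<Rightarrow> nat \<Rightarrow> nat \<Rightarrow> nat list set" where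
  "genetic_markers k n m = {mk. length mk = m - n \<and> (\<forall>i < m - n. mk ! i < k (n + i))}"

text \<open>odo_occ k W n m w pos mk: an n-subword of the odometer m-word w begins at pos and
  has (n,m)-genetic marker mk = [j_n, ..., j_{m-1}].\<close>
inductive odo_occ :: "(nat \<Rightarrow> nat) \<Rightarrow> (nat \<Rightarrow> 'a list set) \<Rightarrow> nat \<Rightarrow> nat \<Rightarrow> 'a list \<Rightarrow> nat \<Rightarrow> nat list \<Rightarrow> bool"
  for k W n where
  base: "w \<in> W n \<Longrightarrow> odo_occ k W n n w 0 []"
| step: "\<lbrakk> w \<in> W (Suc m); w = concat ws; length ws = k m; set ws \<subseteq> W m; j < k m;
          odo_occ k W n m (ws ! j) pos mk \<rbrakk>
         \<Longrightarrow> odo_occ k W n (Suc m) w (length (concat (take j ws)) + pos) (mk @ [j])"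

text \<open>circ_occ k l W n m w pos mk: an n-subword of the circular m-word c_m(w) begins at pos
  and has (n,m)-genetic marker mk.  In C_m(v_0,...), the copy number t of v_j inside the
  block with index (i,j) is an m-subword with marker j.\<close>
inductive circ_occ :: "(nat \<Rightarrow> nat) \<Rightarrow> (nat \<Rightarrow> nat) \<Rightarrow> (nat \<Rightarrow> 'a list set) \<Rightarrow> nat \<Rightarrow> nat \<Rightarrow> 'a list \<Rightarrow> nat \<Rightarrow> nat list \<Rightarrow> bool"
  for k l W n where
  base: "w \<in> W n \<Longrightarrow> circ_occ k l W n n w 0 []"
| step: "\<lbrakk> w \<in> W (Suc m); w = concat ws; length ws = k m; set ws \<subseteq> W m;
          i < qq k l m; j < k m; t < l m - 1;
          circ_occ k l W n m (ws ! j) pos mk \<rbrakk>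
         \<Longrightarrow> circ_occ k l W n (Suc m) w
               (length (concat (take (i * k m + j) (cblocks k l m (map (cmap k l m) ws))))
                 + (qq k l m - jidx k l m i) + t * length (cmap k l m (ws ! j)) + pos)
               (mk @ [j])"

end

theory Submission
  imports Defs "HOL-Number_Theory.Cong"
begin

text \<open>Occurrences are counted one genetic marker at a time. An (m+1)-word w_0 ... w_{k_m-1}
  contains each n-subword of w_j with marker mk exactly once, as the n-subword with marker
  mk @ [j] shifted by j K_m. In C_m(c_m(w_0), ..., c_m(w_{k_m-1})) the word c_m(w_j) is repeated
  l_m - 1 times in each of the q_m blocks with second index j, so each occurrence in c_m(w_j)
  gives q_m (l_m - 1) occurrences. Hence every (n,m)-genetic marker occurs exactly once in w and
  exactly prod_{p=n}^{m-1} q_p (l_p - 1) times in c_m(w). As a position determines its marker,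
  |A| = |S| and |A^c| = |S| prod_{p=n}^{m-1} q_p (l_p - 1); dividing by K_m = K_n prod k_p and by
  q_m = q_n prod k_p l_p q_p gives the densities.\<close>

lemma k_pos: "circ_coeff_seq k l \<Longrightarrow> 0 < k i"
  unfolding circ_coeff_seq_def by (metis less_le_trans pos2)

lemma l_pos: "circ_coeff_seq k l \<Longrightarrow> 0 < l i"
  unfolding circ_coeff_seq_def by (metis less_le_trans less_one)

lemma qq_pos: "circ_coeff_seq k l \<Longrightarrow> 0 < qq k l m"
  by (induction m) (simp_all add: k_pos l_pos)

lemma KK_pos: "circ_coeff_seq k l \<Longrightarrow> 0 < KK k m"
  unfolding KK_def by (simp add: k_pos prod_pos)

lemma KK_Suc: "KK k (Suc m) = KK k m * k m"
  unfolding KK_def by simp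

lemma KK_split: "n \<le> m \<Longrightarrow> KK k m = KK k n * (\<Prod>i\<in>{n..<m}. k i)"
  by (induction m rule: dec_induct) (auto simp: KK_Suc prod.atLeastLessThan_Suc mult_ac)

lemma coprime_pp_qq: "coprime (pp k l m) (qq k l m)"
proof (induction m)
  case 0
  then show ?case by simp
next
  case (Suc m)
  define c where "c = qq k l m * k m * l m"
  have "pp k l (Suc m) = pp k l m * c + 1"
    by (simp add: c_def mult.assoc)
  moreover have "qq k l (Suc m) dvd c * c"
    by (simp add: c_def power2_eq_square mult_ac)
  moreover have "coprime (pp k l m * c + 1) (c * c)"
  proof -
    have "gcd c (pp k l m * c + 1) = gcd c 1" by (rule gcd_add_mult)
    then have "coprime (pp k l m * c + 1) c"
      by (simp add: coprime_iff_gcd_eq_1 gcd.commute mult.commute)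
    then show ?thesis by simp
  qed
  ultimately show ?case
    by (metis coprime_divisors dvd_refl)
qed

text \<open>The index jidx is given by THE; it is well defined because p_m is invertible modulo q_m.\<close>
lemma jidx_less:
  assumes "circ_coeff_seq k l"
  shows "jidx k l m i < qq k l m"
proof -
  let ?p = "pp k l m" and ?q = "qq k l m"
  have q_pos: "0 < ?q" using qq_pos[OF assms] .
  obtain x where x: "[?p * x = Suc 0] (mod ?q)"
    using cong_solve_coprime_nat coprime_pp_qq by blast
  define j where "j = (x * i) mod ?q"
  have "[?p * j = ?p * x * i] (mod ?q)"
    by (simp add: j_def cong_def mod_mult_right_eq mult.assoc)
  also have "[?p * x * i = 1 * i] (mod ?q)"
    using x by (metis cong_scalar_right One_nat_def)
  finally have j: "j < ?q \<and> (?p * j) mod ?q = i mod ?q"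
    using q_pos by (simp add: j_def cong_def)
  have "y = j" if y: "y < ?q \<and> (?p * y) mod ?q = i mod ?q" for y
  proof -
    have "[?p * y = ?p * j] (mod ?q)" using y j by (simp add: cong_def)
    then have "[y = j] (mod ?q)" using cong_mult_lcancel_nat coprime_pp_qq by blast
    then show "y = j" using y j cong_less_modulus_unique_nat by blast
  qed
  then have "jidx k l m i = j"
    unfolding jidx_def using j by (rule the_equality[rotated])
  then show ?thesis using j by simp
qed

lemma length_concat_const:
  "\<forall>x\<in>set xs. length x = L \<Longrightarrow> length (concat xs) = length xs * L"
  by (induction xs) auto

lemma length_concat_take_const:
  assumes "\<forall>x\<in>set xs. length x = L" "j \<le> length xs"
  shows "length (concat (take j xs)) = j * L"
proof -
  have "\<forall>x\<in>set (take j xs). length x = L" using assms(1) by (auto dest: in_set_takeD)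
  then show ?thesis using assms(2) length_concat_const[of "take j xs" L] by simp
qed

lemma take_drop_concat_const:
  "\<forall>x\<in>set xs. length x = L \<Longrightarrow> j < length xs \<Longrightarrow> take L (drop (j * L) (concat xs)) = xs ! j"
proof (induction xs arbitrary: j)
  case Nil
  then show ?case by simp
next
  case (Cons x xs)
  then show ?case by (cases j) auto
qed

lemma mult_add_less_eqD:
  fixes a b r s L :: nat
  assumes "r < L" "s < L" "a * L + r = b * L + s"
  shows "a = b \<and> r = s"
proof -
  have "a = (a * L + r) div L" "b = (b * L + s) div L"
    using assms(1,2) by simp_all
  then have "a = b" using assms(3) by simp
  then show ?thesis using assms(3) by simp
qed

lemma length_W:
  assumes "odometer_construction_seq k Alph W"
  shows "w \<in> W m \<Longrightarrow> length w = KK k m"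
proof (induction m arbitrary: w)
  case 0
  then show ?case using assms by (auto simp: odometer_construction_seq_def KK_def)
next
  case (Suc m)
  then obtain ws where "w = concat ws" "length ws = k m" "set ws \<subseteq> W m"
    using assms unfolding odometer_construction_seq_def by blast
  with Suc.IH show ?case
    using length_concat_const[of ws "KK k m"] by (auto simp: KK_Suc mult.commute)
qed

lemma chunks_concat:
  assumes "odometer_construction_seq k Alph W"
    and "length ws = k m" "set ws \<subseteq> W m"
  shows "chunks k m (concat ws) = ws"
proof (rule nth_equalityI)
  have "\<forall>x\<in>set ws. length x = KK k m"
    using assms length_W by blast
  then show "chunks k m (concat ws) ! j = ws ! j" if "j < length (chunks k m (concat ws))" for j
    using that assms(2) by (simp add: chunks_def take_drop_concat_const)
qed (simp add: chunks_def assms(2))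

lemma W_Suc_chunks:
  assumes "odometer_construction_seq k Alph W" "w \<in> W (Suc m)"
  shows "w = concat (chunks k m w)" "length (chunks k m w) = k m" "set (chunks k m w) \<subseteq> W m"
proof -
  obtain ws where "w = concat ws" "length ws = k m" "set ws \<subseteq> W m"
    using assms unfolding odometer_construction_seq_def by blast
  then show "w = concat (chunks k m w)" "length (chunks k m w) = k m" "set (chunks k m w) \<subseteq> W m"
    using chunks_concat[OF assms(1)] by simp_all
qed

lemma length_cblock:
  assumes "circ_coeff_seq k l" "length (vs ! j) = qq k l m"
  shows "length (cblock k l m vs i j) = l m * qq k l m"
proof -
  have "length (cblock k l m vs i j)
      = (qq k l m - jidx k l m i) + (l m - 1) * qq k l m + jidx k l m i"
    using assms(2) by (simp add: cblock_def length_concat sum_list_replicate)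
  also have "\<dots> = qq k l m + (l m - 1) * qq k l m"
    using jidx_less[OF assms(1), of m i] by linarith
  also have "\<dots> = l m * qq k l m"
    using l_pos[OF assms(1), of m] by (metis Suc_diff_1 mult_Suc)
  finally show ?thesis .
qed

lemma length_cblocks:
  assumes "circ_coeff_seq k l" "\<forall>v\<in>set vs. length v = qq k l m" "length vs = k m"
  shows "length (cblocks k l m vs) = qq k l m * k m"
    and "\<forall>b\<in>set (cblocks k l m vs). length b = l m * qq k l m"
proof -
  show "length (cblocks k l m vs) = qq k l m * k m"
    unfolding cblocks_def by (simp add: length_concat o_def sum_list_triv)
  show "\<forall>b\<in>set (cblocks k l m vs). length b = l m * qq k l m"
    using assms by (auto simp: cblocks_def intro!: length_cblock)
qed

lemma length_cmap:
  assumes "circ_coeff_seq k l"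
  shows "length w = KK k m \<Longrightarrow> length (cmap k l m w) = qq k l m"
proof (induction m arbitrary: w)
  case 0
  then show ?case by (simp add: KK_def)
next
  case (Suc m)
  let ?vs = "map (cmap k l m) (chunks k m w)"
  have "length (chunks k m w ! j) = KK k m" if "j < k m" for j
  proof -
    have "Suc j * KK k m \<le> k m * KK k m" using that by (intro mult_le_mono1) simp
    then show ?thesis using that Suc.prems by (simp add: chunks_def KK_Suc mult.commute)
  qed
  then have vs: "\<forall>v\<in>set ?vs. length v = qq k l m"
    using Suc.IH by (auto simp: in_set_conv_nth chunks_def)
  have n_vs: "length ?vs = k m" by (simp add: chunks_def)
  have "length (cmap k l (Suc m) w) = length (cblocks k l m ?vs) * (l m * qq k l m)"
    unfolding cmap.simps circ_op_def
    by (rule length_concat_const[OF length_cblocks(2)[OF assms vs n_vs]])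
  also have "\<dots> = (qq k l m * k m) * (l m * qq k l m)"
    by (simp only: length_cblocks(1)[OF assms vs n_vs])
  finally show ?case by (simp add: power2_eq_square mult_ac)
qed

lemma genetic_markers_refl: "genetic_markers k n n = {[]}"
  unfolding genetic_markers_def by auto

lemma genetic_markers_Suc:
  assumes "n \<le> m"
  shows "mk \<in> genetic_markers k n (Suc m) \<longleftrightarrow>
    (\<exists>mk' j. mk = mk' @ [j] \<and> mk' \<in> genetic_markers k n m \<and> j < k m)"
proof
  assume mk: "mk \<in> genetic_markers k n (Suc m)"
  then have "length mk = Suc (m - n)"
    using assms by (simp add: genetic_markers_def Suc_diff_le)
  then obtain mk' j where mk_eq: "mk = mk' @ [j]" and len: "length mk' = m - n"
    by (metis length_Suc_conv_rev)
  have nth_mk: "mk ! i < k (n + i)" if "i < Suc m - n" for i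
    using mk that by (simp add: genetic_markers_def)
  have "mk' ! i < k (n + i)" if "i < m - n" for i
    using nth_mk[of i] that len by (simp add: mk_eq nth_append)
  moreover have "j < k m"
    using nth_mk[of "m - n"] len assms by (simp add: mk_eq nth_append)
  ultimately have "mk' \<in> genetic_markers k n m" "j < k m"
    using len by (simp_all add: genetic_markers_def)
  then show "\<exists>mk' j. mk = mk' @ [j] \<and> mk' \<in> genetic_markers k n m \<and> j < k m"
    using mk_eq by blast
next
  assume "\<exists>mk' j. mk = mk' @ [j] \<and> mk' \<in> genetic_markers k n m \<and> j < k m"
  then obtain mk' j where mk: "mk = mk' @ [j]" "mk' \<in> genetic_markers k n m" "j < k m"
    by blast
  have "mk ! i < k (n + i)" if "i < Suc m - n" for i
  proof (cases "i < m - n")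
    case True
    then show ?thesis using mk by (simp add: genetic_markers_def nth_append)
  next
    case False
    then have "i = m - n" using that assms by simp
    then show ?thesis using mk assms by (simp add: genetic_markers_def nth_append)
  qed
  then show "mk \<in> genetic_markers k n (Suc m)"
    using mk assms by (simp add: genetic_markers_def Suc_diff_le)
qed

lemma finite_genetic_markers: "n \<le> m \<Longrightarrow> finite (genetic_markers k n m)"
proof (induction m rule: dec_induct)
  case base
  then show ?case by (simp add: genetic_markers_refl)
next
  case (step m)
  have "genetic_markers k n (Suc m) \<subseteq> (\<lambda>(mk, j). mk @ [j]) ` (genetic_markers k n m \<times> {..<k m})"
    by (force simp: genetic_markers_Suc[OF step.hyps(1)])
  then show ?case
    using step.IH by (meson finite_SigmaI finite_imageI finite_lessThan finite_subset)
qed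

lemma card_UN_disjoint_const:
  assumes "finite S" "\<And>x. x \<in> S \<Longrightarrow> finite (F x)" "\<And>x. x \<in> S \<Longrightarrow> card (F x) = c"
    and "\<And>x y p. x \<in> S \<Longrightarrow> y \<in> S \<Longrightarrow> p \<in> F x \<Longrightarrow> p \<in> F y \<Longrightarrow> x = y"
  shows "card {p. \<exists>x\<in>S. p \<in> F x} = card S * c"
proof -
  have "{p. \<exists>x\<in>S. p \<in> F x} = (\<Union>x\<in>S. F x)" by blast
  also have "card \<dots> = (\<Sum>x\<in>S. card (F x))"
  proof (rule card_UN_disjoint)
    show "\<forall>x\<in>S. \<forall>y\<in>S. x \<noteq> y \<longrightarrow> F x \<inter> F y = {}"
      using assms(4) by auto
  qed (use assms(1,2) in auto)
  also have "\<dots> = card S * c" using assms(3) by simp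
  finally show ?thesis .
qed

section \<open>Occurrences in odometer words\<close>

lemma odo_occ_le_in_W: "odo_occ k W n m w pos mk \<Longrightarrow> n \<le> m \<and> w \<in> W m"
  by (induction rule: odo_occ.induct) auto

lemma odo_occ_refl_iff: "odo_occ k W n n w pos mk \<longleftrightarrow> w \<in> W n \<and> pos = 0 \<and> mk = []"
proof
  assume "odo_occ k W n n w pos mk"
  then show "w \<in> W n \<and> pos = 0 \<and> mk = []"
    by (cases rule: odo_occ.cases) (auto dest: odo_occ_le_in_W)
qed (auto intro: odo_occ.base)

lemma odo_occ_less:
  assumes "circ_coeff_seq k l" "odometer_construction_seq k Alph W"
  shows "odo_occ k W n m w pos mk \<Longrightarrow> pos < KK k m"
proof (induction rule: odo_occ.induct)
  case (base w)
  show ?case by (rule KK_pos[OF assms(1)])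
next
  case (step w m ws j pos mk)
  have "length (concat (take j ws)) = j * KK k m"
    using step length_W[OF assms(2)] by (intro length_concat_take_const) auto
  then have "length (concat (take j ws)) + pos < Suc j * KK k m"
    using step.IH by simp
  also have "\<dots> \<le> KK k (Suc m)"
    using mult_le_mono1[of "Suc j" "k m" "KK k m"] step.hyps(5) by (simp add: KK_Suc mult.commute)
  finally show ?case .
qed

lemma odo_occ_Suc_iff:
  assumes "odometer_construction_seq k Alph W" "w \<in> W (Suc m)" "n \<le> m"
  shows "odo_occ k W n (Suc m) w pos mk \<longleftrightarrow>
    (\<exists>j p mk'. j < k m \<and> mk = mk' @ [j] \<and> pos = j * KK k m + p
       \<and> odo_occ k W n m (chunks k m w ! j) p mk')"
proof -
  note chunks = W_Suc_chunks[OF assms(1,2)]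
  have start: "length (concat (take j (chunks k m w))) = j * KK k m" if "j < k m" for j
    using chunks that length_W[OF assms(1)] by (intro length_concat_take_const) auto
  show ?thesis
  proof
    assume "odo_occ k W n (Suc m) w pos mk"
    then show "\<exists>j p mk'. j < k m \<and> mk = mk' @ [j] \<and> pos = j * KK k m + p
       \<and> odo_occ k W n m (chunks k m w ! j) p mk'"
    proof (cases rule: odo_occ.cases)
      case base
      then show ?thesis using assms(3) by simp
    next
      case (step ws j p mk')
      then have "chunks k m w = ws" using chunks_concat[OF assms(1)] by simp
      then show ?thesis using step start by metis
    qed
  next
    assume "\<exists>j p mk'. j < k m \<and> mk = mk' @ [j] \<and> pos = j * KK k m + p
       \<and> odo_occ k W n m (chunks k m w ! j) p mk'"
    then obtain j p mk' where "j < k m" "mk = mk' @ [j]" "pos = j * KK k m + p"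
      and occ: "odo_occ k W n m (chunks k m w ! j) p mk'" by blast
    with odo_occ.step[OF assms(2) chunks \<open>j < k m\<close> occ] start
    show "odo_occ k W n (Suc m) w pos mk" by simp
  qed
qed

lemma odo_occ_marker_unique:
  assumes "circ_coeff_seq k l" "odometer_construction_seq k Alph W" "n \<le> m"
  shows "odo_occ k W n m w pos mk \<Longrightarrow> odo_occ k W n m w pos mk' \<Longrightarrow> mk = mk'"
  using assms(3)
proof (induction m arbitrary: w pos mk mk' rule: dec_induct)
  case base
  then show ?case by (simp add: odo_occ_refl_iff)
next
  case (step m)
  have w: "w \<in> W (Suc m)" using step.prems odo_occ_le_in_W by blast
  obtain j p mk1 where mk: "mk = mk1 @ [j]" and pos: "pos = j * KK k m + p"
    and occ: "odo_occ k W n m (chunks k m w ! j) p mk1"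
    using step.prems(1) odo_occ_Suc_iff[OF assms(2) w step.hyps(1)] by blast
  obtain j' p' mk1' where mk': "mk' = mk1' @ [j']" and pos': "pos = j' * KK k m + p'"
    and occ': "odo_occ k W n m (chunks k m w ! j') p' mk1'"
    using step.prems(2) odo_occ_Suc_iff[OF assms(2) w step.hyps(1)] by blast
  have "p < KK k m" "p' < KK k m"
    using occ occ' odo_occ_less[OF assms(1,2)] by blast+
  then have "j = j' \<and> p = p'"
    using mult_add_less_eqD pos pos' by metis
  then show ?case using step.IH occ occ' mk mk' by metis
qed

lemma card_odo_occ:
  assumes "circ_coeff_seq k l" "odometer_construction_seq k Alph W" "n \<le> m"
  shows "w \<in> W m \<Longrightarrow> mk \<in> genetic_markers k n m \<Longrightarrow> card {pos. odo_occ k W n m w pos mk} = 1"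
  using assms(3)
proof (induction m arbitrary: w mk rule: dec_induct)
  case base
  then show ?case by (simp add: odo_occ_refl_iff genetic_markers_refl)
next
  case (step m)
  obtain mk' j where mk: "mk = mk' @ [j]" "mk' \<in> genetic_markers k n m" "j < k m"
    using step.prems(2) genetic_markers_Suc[OF step.hyps(1)] by blast
  have "{pos. odo_occ k W n (Suc m) w pos mk}
      = (\<lambda>p. j * KK k m + p) ` {p. odo_occ k W n m (chunks k m w ! j) p mk'}"
    using odo_occ_Suc_iff[OF assms(2) step.prems(1) step.hyps(1)] mk(1,3) by auto
  moreover have "chunks k m w ! j \<in> W m"
    using W_Suc_chunks[OF assms(2) step.prems(1)] mk(3) by auto
  ultimately show ?case
    using step.IH mk(2) by (simp add: card_image)
qed

lemma card_odo_positions: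
  assumes "circ_coeff_seq k l" "odometer_construction_seq k Alph W" "n \<le> m"
    and "w \<in> W m" "S \<subseteq> genetic_markers k n m"
  shows "card {pos. \<exists>mk\<in>S. odo_occ k W n m w pos mk} = card S"
proof -
  have "card {pos. \<exists>mk\<in>S. pos \<in> {p. odo_occ k W n m w p mk}} = card S * 1"
  proof (rule card_UN_disjoint_const)
    show "finite S" using assms(3,5) finite_genetic_markers finite_subset by blast
    show "finite {p. odo_occ k W n m w p mk}" for mk
      by (rule finite_subset[of _ "{..<KK k m}"]) (auto dest: odo_occ_less[OF assms(1,2)])
    show "card {p. odo_occ k W n m w p mk} = 1" if "mk \<in> S" for mk
      using card_odo_occ[OF assms(1-4)] that assms(5) by auto
    show "mk = mk'" if "pos \<in> {p. odo_occ k W n m w p mk}" "pos \<in> {p. odo_occ k W n m w p mk'}"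
      for mk mk' pos
      using odo_occ_marker_unique[OF assms(1-3)] that by simp
  qed
  then show ?thesis by simp
qed

section \<open>Occurrences in circular words\<close>

text \<open>In C_m(v_0,...,v_{k_m-1}) the block with index (i, j) is b^{q_m - j_i} v_j^{l_m - 1} e^{j_i},
  of length l_m q_m; copy t of v_j in it begins at copy_start k l m i j t.\<close>
definition copy_start :: "(nat \<Rightarrow> nat) \<Rightarrow> (nat \<Rightarrow> nat) \<Rightarrow> nat \<Rightarrow> nat \<Rightarrow> nat \<Rightarrow> nat \<Rightarrow> nat" where
  "copy_start k l m i j t =
     (i * k m + j) * (l m * qq k l m) + (qq k l m - jidx k l m i) + t * qq k l m"

lemma circ_occ_step_position:
  assumes "circ_coeff_seq k l" "odometer_construction_seq k Alph W"
    and "length ws = k m" "set ws \<subseteq> W m" "i < qq k l m" "j < k m"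
  shows "length (concat (take (i * k m + j) (cblocks k l m (map (cmap k l m) ws))))
           + (qq k l m - jidx k l m i) + t * length (cmap k l m (ws ! j)) + p
         = copy_start k l m i j t + p"
proof -
  have vs: "\<forall>v\<in>set (map (cmap k l m) ws). length v = qq k l m"
    using assms(4) by (auto intro!: length_cmap[OF assms(1)] length_W[OF assms(2)])
  have "i * k m + j < qq k l m * k m"
    using assms(5,6) mult_le_mono1[of "Suc i" "qq k l m" "k m"] by simp
  then have "length (concat (take (i * k m + j) (cblocks k l m (map (cmap k l m) ws))))
      = (i * k m + j) * (l m * qq k l m)"
    using length_cblocks[OF assms(1) vs] assms(3) by (intro length_concat_take_const) simp_all
  moreover have "length (cmap k l m (ws ! j)) = qq k l m"
    using assms(3,4,6) by (auto intro!: length_cmap[OF assms(1)] length_W[OF assms(2)])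
  ultimately show ?thesis by (simp add: copy_start_def)
qed

lemma copy_offset_less:
  assumes "t < l m - 1" "p < qq k l m"
  shows "(qq k l m - jidx k l m i) + t * qq k l m + p < l m * qq k l m"
proof -
  have "(t + 2) * qq k l m \<le> l m * qq k l m"
    using assms(1) by (intro mult_le_mono1) simp
  then show ?thesis using assms(2) by (simp add: algebra_simps)
qed

lemma copy_start_less:
  assumes "i < qq k l m" "j < k m" "t < l m - 1" "p < qq k l m"
  shows "copy_start k l m i j t + p < qq k l (Suc m)"
proof -
  let ?L = "l m * qq k l m"
  have "copy_start k l m i j t + p < (i * k m + j) * ?L + ?L"
    using copy_offset_less[OF assms(3,4), of i] by (simp add: copy_start_def add.assoc)
  also have "\<dots> = Suc (i * k m + j) * ?L" by simp
  also have "\<dots> \<le> (qq k l m * k m) * ?L"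
    using assms(1,2) mult_le_mono1[of "Suc i" "qq k l m" "k m"] by (intro mult_le_mono1) simp
  also have "\<dots> = qq k l (Suc m)" by (simp add: power2_eq_square mult_ac)
  finally show ?thesis .
qed

lemma copy_start_inj:
  assumes "j < k m" "j' < k m" "t < l m - 1" "t' < l m - 1" "p < qq k l m" "p' < qq k l m"
    and "copy_start k l m i j t + p = copy_start k l m i' j' t' + p'"
  shows "i = i' \<and> j = j' \<and> t = t' \<and> p = p'"
proof -
  have "i * k m + j = i' * k m + j'" and offset:
    "(qq k l m - jidx k l m i) + t * qq k l m + p = (qq k l m - jidx k l m i') + t' * qq k l m + p'"
    using mult_add_less_eqD[OF copy_offset_less[OF assms(3,5)] copy_offset_less[OF assms(4,6)]] assms(7)
    by (simp_all add: copy_start_def add.assoc)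
  then have "i = i' \<and> j = j'" using mult_add_less_eqD assms(1,2) by blast
  then have "t * qq k l m + p = t' * qq k l m + p'" using offset by simp
  then have "t = t' \<and> p = p'" using mult_add_less_eqD assms(5,6) by blast
  with \<open>i = i' \<and> j = j'\<close> show ?thesis by blast
qed

lemma circ_occ_le_in_W: "circ_occ k l W n m w pos mk \<Longrightarrow> n \<le> m \<and> w \<in> W m"
  by (induction rule: circ_occ.induct) auto

lemma circ_occ_refl_iff: "circ_occ k l W n n w pos mk \<longleftrightarrow> w \<in> W n \<and> pos = 0 \<and> mk = []"
proof
  assume "circ_occ k l W n n w pos mk"
  then show "w \<in> W n \<and> pos = 0 \<and> mk = []"
    by (cases rule: circ_occ.cases) (auto dest: circ_occ_le_in_W)
qed (auto intro: circ_occ.base)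

lemma circ_occ_Suc_iff:
  assumes "circ_coeff_seq k l" "odometer_construction_seq k Alph W" "w \<in> W (Suc m)" "n \<le> m"
  shows "circ_occ k l W n (Suc m) w pos mk \<longleftrightarrow>
    (\<exists>i j t p mk'. i < qq k l m \<and> j < k m \<and> t < l m - 1 \<and> mk = mk' @ [j]
       \<and> pos = copy_start k l m i j t + p \<and> circ_occ k l W n m (chunks k m w ! j) p mk')"
proof
  assume "circ_occ k l W n (Suc m) w pos mk"
  then show "\<exists>i j t p mk'. i < qq k l m \<and> j < k m \<and> t < l m - 1 \<and> mk = mk' @ [j]
       \<and> pos = copy_start k l m i j t + p \<and> circ_occ k l W n m (chunks k m w ! j) p mk'"
  proof (cases rule: circ_occ.cases)
    case base
    then show ?thesis using assms(4) by simp
  next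
    case (step ws i j t p mk')
    then have "chunks k m w = ws" using chunks_concat[OF assms(2)] by simp
    then show ?thesis using step circ_occ_step_position[OF assms(1,2)] by metis
  qed
next
  assume "\<exists>i j t p mk'. i < qq k l m \<and> j < k m \<and> t < l m - 1 \<and> mk = mk' @ [j]
       \<and> pos = copy_start k l m i j t + p \<and> circ_occ k l W n m (chunks k m w ! j) p mk'"
  then obtain i j t p mk' where ijt: "i < qq k l m" "j < k m" "t < l m - 1"
    and "mk = mk' @ [j]" "pos = copy_start k l m i j t + p"
    and occ: "circ_occ k l W n m (chunks k m w ! j) p mk'" by blast
  note chunks = W_Suc_chunks[OF assms(2,3)]
  with circ_occ.step[OF assms(3) chunks ijt occ] circ_occ_step_position[OF assms(1,2) chunks(2,3) ijt(1,2)]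
  show "circ_occ k l W n (Suc m) w pos mk"
    using \<open>mk = mk' @ [j]\<close> \<open>pos = copy_start k l m i j t + p\<close> by simp
qed

lemma circ_occ_less:
  assumes "circ_coeff_seq k l" "odometer_construction_seq k Alph W"
  shows "circ_occ k l W n m w pos mk \<Longrightarrow> pos < qq k l m"
proof (induction rule: circ_occ.induct)
  case (base w)
  show ?case by (rule qq_pos[OF assms(1)])
next
  case (step w m ws i j t pos mk)
  then show ?case
    using circ_occ_step_position[OF assms] copy_start_less by simp
qed

lemma circ_occ_marker_unique:
  assumes "circ_coeff_seq k l" "odometer_construction_seq k Alph W" "n \<le> m"
  shows "circ_occ k l W n m w pos mk \<Longrightarrow> circ_occ k l W n m w pos mk' \<Longrightarrow> mk = mk'"
  using assms(3)
proof (induction m arbitrary: w pos mk mk' rule: dec_induct)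
  case base
  then show ?case by (simp add: circ_occ_refl_iff)
next
  case (step m)
  have w: "w \<in> W (Suc m)" using step.prems circ_occ_le_in_W by blast
  obtain i j t p mk1 where ijt: "j < k m" "t < l m - 1" and mk: "mk = mk1 @ [j]"
    and pos: "pos = copy_start k l m i j t + p"
    and occ: "circ_occ k l W n m (chunks k m w ! j) p mk1"
    using step.prems(1) circ_occ_Suc_iff[OF assms(1,2) w step.hyps(1)] by blast
  obtain i' j' t' p' mk1' where ijt': "j' < k m" "t' < l m - 1" and mk': "mk' = mk1' @ [j']"
    and pos': "pos = copy_start k l m i' j' t' + p'"
    and occ': "circ_occ k l W n m (chunks k m w ! j') p' mk1'"
    using step.prems(2) circ_occ_Suc_iff[OF assms(1,2) w step.hyps(1)] by blast
  have "p < qq k l m" "p' < qq k l m"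
    using occ occ' circ_occ_less[OF assms(1,2)] by blast+
  moreover have "copy_start k l m i j t + p = copy_start k l m i' j' t' + p'"
    using pos pos' by simp
  ultimately have "i = i' \<and> j = j' \<and> t = t' \<and> p = p'"
    using ijt ijt' by (intro copy_start_inj)
  then show ?case using step.IH occ occ' mk mk' by metis
qed

lemma card_circ_occ:
  assumes "circ_coeff_seq k l" "odometer_construction_seq k Alph W" "n \<le> m"
  shows "w \<in> W m \<Longrightarrow> mk \<in> genetic_markers k n m \<Longrightarrow>
    card {pos. circ_occ k l W n m w pos mk} = (\<Prod>p\<in>{n..<m}. qq k l p * (l p - 1))"
  using assms(3)
proof (induction m arbitrary: w mk rule: dec_induct)
  case base
  then show ?case by (simp add: circ_occ_refl_iff genetic_markers_refl)
next
  case (step m)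
  obtain mk' j where mk: "mk = mk' @ [j]" "mk' \<in> genetic_markers k n m" "j < k m"
    using step.prems(2) genetic_markers_Suc[OF step.hyps(1)] by blast
  define P where "P = {p. circ_occ k l W n m (chunks k m w ! j) p mk'}"
  define D where "D = {..<qq k l m} \<times> {..<l m - 1} \<times> P"
  let ?f = "\<lambda>(i, t, p). copy_start k l m i j t + p"
  have "{pos. circ_occ k l W n (Suc m) w pos mk} = ?f ` D"
  proof (rule set_eqI)
    fix pos
    have "pos \<in> {pos. circ_occ k l W n (Suc m) w pos mk} \<longleftrightarrow>
        (\<exists>i t p. i < qq k l m \<and> t < l m - 1 \<and> p \<in> P \<and> pos = copy_start k l m i j t + p)"
      using circ_occ_Suc_iff[OF assms(1,2) step.prems(1) step.hyps(1)] mk(1,3)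
      by (auto simp: P_def)
    also have "\<dots> \<longleftrightarrow> pos \<in> ?f ` D"
      unfolding D_def image_iff by fastforce
    finally show "pos \<in> {pos. circ_occ k l W n (Suc m) w pos mk} \<longleftrightarrow> pos \<in> ?f ` D" .
  qed
  moreover have "inj_on ?f D"
  proof (rule inj_onI)
    fix x y assume "x \<in> D" "y \<in> D" "?f x = ?f y"
    moreover obtain i t p i' t' p' where "x = (i, t, p)" "y = (i', t', p')"
      by (cases x, cases y) auto
    ultimately show "x = y"
      using copy_start_inj[of j k m j t l t' p p' i i'] mk(3) circ_occ_less[OF assms(1,2)]
      by (auto simp: D_def P_def)
  qed
  moreover have "chunks k m w ! j \<in> W m"
    using W_Suc_chunks[OF assms(2) step.prems(1)] mk(3) by auto
  then have "card P = (\<Prod>p\<in>{n..<m}. qq k l p * (l p - 1))"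
    using step.IH mk(2) by (simp add: P_def)
  ultimately show ?case
    using step.hyps(1)
    by (simp add: card_image D_def card_cartesian_product prod.atLeastLessThan_Suc mult_ac)
qed

lemma card_circ_positions:
  assumes "circ_coeff_seq k l" "odometer_construction_seq k Alph W" "n \<le> m"
    and "w \<in> W m" "S \<subseteq> genetic_markers k n m"
  shows "card {pos. \<exists>mk\<in>S. circ_occ k l W n m w pos mk}
    = card S * (\<Prod>p\<in>{n..<m}. qq k l p * (l p - 1))"
proof -
  have "card {pos. \<exists>mk\<in>S. pos \<in> {p. circ_occ k l W n m w p mk}}
    = card S * (\<Prod>p\<in>{n..<m}. qq k l p * (l p - 1))"
  proof (rule card_UN_disjoint_const)
    show "finite S" using assms(3,5) finite_genetic_markers finite_subset by blast
    show "finite {p. circ_occ k l W n m w p mk}" for mk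
      by (rule finite_subset[of _ "{..<qq k l m}"]) (auto dest: circ_occ_less[OF assms(1,2)])
    show "card {p. circ_occ k l W n m w p mk} = (\<Prod>p\<in>{n..<m}. qq k l p * (l p - 1))" if "mk \<in> S" for mk
      using card_circ_occ[OF assms(1-4)] that assms(5) by auto
    show "mk = mk'" if "pos \<in> {p. circ_occ k l W n m w p mk}" "pos \<in> {p. circ_occ k l W n m w p mk'}"
      for mk mk' pos
      using circ_occ_marker_unique[OF assms(1-3)] that by simp
  qed
  then show ?thesis by simp
qed

lemma circ_occurrence_density:
  assumes "circ_coeff_seq k l" "n \<le> m"
  shows "real (\<Prod>p\<in>{n..<m}. qq k l p * (l p - 1)) / real (qq k l m)
    = (\<Prod>p\<in>{n..<m}. 1 - 1 / real (l p)) / (real (qq k l n) * real (\<Prod>i\<in>{n..<m}. k i))"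
  using assms(2)
proof (induction m rule: dec_induct)
  case base
  then show ?case using qq_pos[OF assms(1), of n] by simp
next
  case (step m)
  have pos: "0 < real (k m)" "0 < real (l m)" "0 < real (qq k l m)"
    using k_pos[OF assms(1)] l_pos[OF assms(1)] qq_pos[OF assms(1)] by simp_all
  let ?P = "\<lambda>m. real (\<Prod>p\<in>{n..<m}. qq k l p * (l p - 1))"
  let ?D = "\<lambda>m. (\<Prod>p\<in>{n..<m}. 1 - 1 / real (l p))"
  let ?G = "\<lambda>m. real (\<Prod>i\<in>{n..<m}. k i)"
  have "real (l m - 1) = real (l m) - 1"
    using l_pos[OF assms(1), of m] by (simp add: of_nat_diff)
  then have factor: "real (qq k l m * (l m - 1)) / real (qq k l (Suc m)) * real (qq k l m)
      = (1 - 1 / real (l m)) / real (k m)"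
    using pos by (simp add: power2_eq_square field_simps)
  have "?P (Suc m) / real (qq k l (Suc m))
      = ?P m / real (qq k l m) * (real (qq k l m * (l m - 1)) / real (qq k l (Suc m)) * real (qq k l m))"
    using pos step.hyps by (simp add: prod.atLeastLessThan_Suc)
  also have "\<dots> = ?D m / (real (qq k l n) * ?G m) * ((1 - 1 / real (l m)) / real (k m))"
    by (simp only: step.IH factor)
  also have "\<dots> = ?D (Suc m) / (real (qq k l n) * ?G (Suc m))"
    using step.hyps by (simp add: prod.atLeastLessThan_Suc)
  finally show ?case .
qed

theorem mainTheorem13:
  fixes k l :: "nat \<Rightarrow> nat" and Alph :: "'a set" and W :: "nat \<Rightarrow> 'a list set"
    and n m :: nat and w :: "'a list" and S :: "nat list set"
  assumes "circ_coeff_seq k l"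
    and "odometer_construction_seq k Alph W"
    and "n \<le> m" and "w \<in> W m"
    and "S \<subseteq> genetic_markers k n m"
  defines "d \<equiv> real (card S) / real (\<Prod>i\<in>{n..<m}. k i)"
    and "A \<equiv> {pos. \<exists>mk\<in>S. odo_occ k W n m w pos mk}"
    and "Ac \<equiv> {pos. \<exists>mk\<in>S. circ_occ k l W n m w pos mk}"
  shows "real (card A) / real (KK k m) = d / real (KK k n)
    \<and> real (card Ac) / real (qq k l m)
        = d / real (qq k l n) * (\<Prod>p\<in>{n..<m}. 1 - 1 / real (l p))
    \<and> real (card Ac) / real (qq k l m)
        = real (card A) / real (KK k m) * (\<Prod>p\<in>{n..<m}. 1 - 1 / real (l p))
          * real (KK k n) / real (qq k l n)"
proof -
  have card_A: "card A = card S"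
    unfolding A_def by (rule card_odo_positions[OF assms(1-5)])
  have card_Ac: "card Ac = card S * (\<Prod>p\<in>{n..<m}. qq k l p * (l p - 1))"
    unfolding Ac_def by (rule card_circ_positions[OF assms(1-5)])
  have "0 < real (KK k n)" "0 < real (\<Prod>i\<in>{n..<m}. k i)"
    using KK_pos qq_pos k_pos assms(1) by (simp_all add: prod_pos)
  moreover have "real (KK k m) = real (KK k n) * real (\<Prod>i\<in>{n..<m}. k i)"
    using KK_split[OF assms(3)] by simp
  ultimately have odo: "real (card A) / real (KK k m) = d / real (KK k n)"
    unfolding card_A d_def by (simp add: field_simps)
  have circ: "real (card Ac) / real (qq k l m)
      = d / real (qq k l n) * (\<Prod>p\<in>{n..<m}. 1 - 1 / real (l p))"
    using circ_occurrence_density[OF assms(1,3)]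
    unfolding card_Ac d_def of_nat_mult times_divide_eq_right[symmetric] by simp
  have "d = real (card A) / real (KK k m) * real (KK k n)"
    using odo \<open>0 < real (KK k n)\<close> by (simp add: field_simps)
  then have "real (card Ac) / real (qq k l m)
      = real (card A) / real (KK k m) * (\<Prod>p\<in>{n..<m}. 1 - 1 / real (l p))
        * real (KK k n) / real (qq k l n)"
    unfolding circ by (simp add: mult_ac)
  with odo circ show ?thesis by blast
qed

end
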